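(* Let $\mathcal D$ be a database schema and let $\{P_1,\ldots,P_k\}\subseteq\mathcal D$ be the maximal set of relation symbols of $\mathcal D$ such that the relation for each of $P_1,\ldots,P_k$ is required to be set valued in all instances $D$ over $\mathcal D$. Given CQ queries $Q_1,Q_2$ over $\mathcal D$, let $Q_1'$ (resp. $Q_2'$) be obtained from $Q_1$ (resp. $Q_2$) by removing all duplicate subgoals whose predicates correspond to $P_1,\ldots,P_k$ (keeping one copy of each). Then $Q_1(D,B)=Q_2(D,B)$ as bags for every bag-valued instance $D$ of $\mathcal D$ in which $P_1,\ldots,P_k$ are set valued if and only if $Q_1'$ and $Q_2'$ are isomorphic.
   Context: A database instance over $\mathcal D$ assigns to each relation symbol a finite bag (multiset) of tuples; a relation is set valued if every tuple has multiplicity $1$. A CQ query is $Q(\bar X):-p_1(\bar X_1),\dots,p_n(\bar X_n)$, $n\ge1$, with relational atoms (subgoals, possibly repeated) over $\mathcal D$ and every head variable occurring in the body. Under bag semantics, each assignment $\gamma$ of the variables to constants such that every $\gamma(\bar X_i)$ is a tuple of the relation $P_i$ of $p_i$ contributes $\prod_i m_i$ copies of $\gamma(\bar X)$ to the bag $Q(D,B)$, where $m_i$ is the multiplicity of $\gamma(\bar X_i)$ in $P_i$. Two CQ queries are isomorphic if a bijective renaming of variables maps one onto the other (head onto head, body onto body as multisets of atoms). *)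

theory Defs
  imports Main "HOL-Library.Multiset"
begin

type_synonym ('r,'v) atom = "'r \<times> 'v list"

record ('r,'v) cq =
  head :: "'v list"
  body :: "('r,'v) atom multiset"

definition cq_vars :: "('r,'v) cq \<Rightarrow> 'v set" where
  "cq_vars Q = (\<Union>a\<in>set_mset (body Q). set (snd a))"

definition cq_over :: "'r set \<Rightarrow> ('r \<Rightarrow> nat) \<Rightarrow> ('r,'v) cq \<Rightarrow> bool" where
  "cq_over Sch ar Q \<longleftrightarrow>
     body Q \<noteq> {#} \<and>
     (\<forall>a\<in>set_mset (body Q). fst a \<in> Sch \<and> length (snd a) = ar (fst a)) \<and>
     set (head Q) \<subseteq> cq_vars Q"

text \<open>A (bag-valued) instance: multiplicity of each tuple in each relation.\<close>

type_synonym ('r,'c) inst = "'r \<Rightarrow> 'c list \<Rightarrow> nat"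

definition instance_over :: "'r set \<Rightarrow> ('r \<Rightarrow> nat) \<Rightarrow> ('r,'c) inst \<Rightarrow> bool" where
  "instance_over Sch ar D \<longleftrightarrow>
     finite {(p,t). D p t > 0} \<and>
     (\<forall>p t. D p t > 0 \<longrightarrow> p \<in> Sch \<and> length t = ar p)"

definition set_valued_on :: "'r set \<Rightarrow> ('r,'c) inst \<Rightarrow> bool" where
  "set_valued_on S D \<longleftrightarrow> (\<forall>p\<in>S. \<forall>t. D p t \<le> 1)"

definition adom :: "('r,'c) inst \<Rightarrow> 'c set" where
  "adom D = {c. \<exists>p t. D p t > 0 \<and> c \<in> set t}"

text \<open>Assignments relevant for Q over D: variables of Q go to the active domain
  (other assignments contribute multiplicity 0), others are fixed to undefined.\<close>

definition assignments :: "('r,'v) cq \<Rightarrow> ('r,'c) inst \<Rightarrow> ('v \<Rightarrow> 'c) set" where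
  "assignments Q D = {\<gamma>. (\<forall>x\<in>cq_vars Q. \<gamma> x \<in> adom D) \<and> (\<forall>x. x \<notin> cq_vars Q \<longrightarrow> \<gamma> x = undefined)}"

definition bag_answer :: "('r,'v) cq \<Rightarrow> ('r,'c) inst \<Rightarrow> 'c list \<Rightarrow> nat" where
  "bag_answer Q D t =
     (\<Sum>\<gamma>\<in>assignments Q D.
        if map \<gamma> (head Q) = t
        then prod_mset (image_mset (\<lambda>(p,xs). D p (map \<gamma> xs)) (body Q))
        else 0)"

definition dedup :: "'r set \<Rightarrow> ('r,'v) cq \<Rightarrow> ('r,'v) cq" where
  "dedup S Q = Q\<lparr> body := filter_mset (\<lambda>a. fst a \<notin> S) (body Q)
                          + mset_set {a \<in> set_mset (body Q). fst a \<in> S} \<rparr>"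

definition cq_iso :: "('r,'v) cq \<Rightarrow> ('r,'v) cq \<Rightarrow> bool" where
  "cq_iso Q1 Q2 \<longleftrightarrow> (\<exists>f. inj_on f (cq_vars Q1) \<and> map f (head Q1) = head Q2 \<and>
      image_mset (\<lambda>(p,xs). (p, map f xs)) (body Q1) = body Q2)"

end

theory Submission
  imports Defs "HOL-Library.FuncSet" "HOL-Computational_Algebra.Polynomial"
begin

text \<open>On instances where the relations of \<open>S\<close> are sets, a repeated \<open>S\<close>-subgoal only
  repeats a factor \<open>m \<in> {0, 1}\<close>, so deduplication does not change answers, and isomorphic
  queries have equal answers.

  Conversely, freeze \<open>Q\<^sub>2\<close> by an injective assignment \<open>c\<close> of constants and probe with
  instances supported by the frozen body, in which an \<open>S\<close>-atom is present iff it lies in a chosen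
  set \<open>T\<close> and any other atom \<open>a\<close> has multiplicity \<open>M ^ B ^ idx a\<close> for a large base \<open>B\<close>.
  At the frozen head both answers are then sums of powers of \<open>M\<close>, indexed by the assignments
  into the frozen body. Equality for all \<open>T\<close> and \<open>M\<close> gives, by Moebius inversion over \<open>T\<close> and
  comparison of polynomial coefficients, an assignment of \<open>Q\<^sub>1\<close> that covers all frozen
  \<open>S\<close>-atoms and has the same exponent as \<open>c\<close>. Read in base \<open>B\<close>, the exponent shows that it maps the
  non-\<open>S\<close> subgoals of \<open>Q\<^sub>1\<close> onto those of the frozen \<open>Q\<^sub>2\<close> with multiplicities; composed
  with \<open>c\<^sup>-\<^sup>1\<close> it maps \<open>dedup S Q\<^sub>1\<close> onto \<open>dedup S Q\<^sub>2\<close>. By symmetry there are surjections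
  between the finite variable sets in both directions, so they are bijections and the deduplicated
  queries are isomorphic.\<close>

section \<open>Digit expansions, power sums and subset sums\<close>

lemma sum_digits_less_power:
  fixes B :: nat
  assumes "B > 0" "finite A" "inj_on idx A" "\<And>a. a \<in> A \<Longrightarrow> idx a < n \<and> c a < B"
  shows "(\<Sum>a\<in>A. c a * B ^ idx a) < B ^ n"
proof -
  have geometric: "(\<Sum>i<m. (B - 1) * B ^ i) < B ^ m" for m
  proof (induction m)
    case (Suc m)
    have "(\<Sum>i<Suc m. (B - 1) * B ^ i) < B ^ m + (B - 1) * B ^ m" using Suc by simp
    also have "\<dots> = B ^ Suc m" using assms(1) by (simp add: algebra_simps)
    finally show ?case .
  qed simp
  have "(\<Sum>a\<in>A. c a * B ^ idx a) \<le> (\<Sum>a\<in>A. (B - 1) * B ^ idx a)"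
    by (rule sum_mono) (use assms(4) in force)
  also have "\<dots> = (\<Sum>i\<in>idx ` A. (B - 1) * B ^ i)"
    using assms(3) by (simp add: sum.reindex)
  also have "\<dots> \<le> (\<Sum>i<n. (B - 1) * B ^ i)"
    by (rule sum_mono2) (use assms(2,4) in auto)
  also have "\<dots> < B ^ n" by (rule geometric)
  finally show ?thesis .
qed

lemma digits_unique:
  fixes B :: nat
  assumes "finite A" "inj_on idx A" "\<And>a. a \<in> A \<Longrightarrow> c a < B \<and> d a < B"
    and "(\<Sum>a\<in>A. c a * B ^ idx a) = (\<Sum>a\<in>A. d a * B ^ idx a)"
  shows "\<forall>a\<in>A. c a = d a"
  using assms
proof (induction A rule: finite_ranking_induct[where f = idx])
  case empty
  then show ?case by simp
next
  case (insert x A)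
  show ?case
  proof (cases "x \<in> A")
    case True
    then show ?thesis using insert by (simp add: insert_absorb)
  next
    case False
    have below: "idx y < idx x" if "y \<in> A" for y
    proof -
      have "idx y \<noteq> idx x" using insert(4) that False by (auto simp: inj_on_def)
      then show ?thesis using insert(2)[OF that] by simp
    qed
    have "inj_on idx A" using insert(4) by simp
    have "B > 0" using insert(5)[of x] by simp
    then have pos: "B ^ idx x > 0" by simp
    have c_rest: "(\<Sum>a\<in>A. c a * B ^ idx a) < B ^ idx x"
      and d_rest: "(\<Sum>a\<in>A. d a * B ^ idx a) < B ^ idx x"
      using sum_digits_less_power[OF \<open>B > 0\<close> insert(1) \<open>inj_on idx A\<close>] below insert(5) by auto
    have sums: "c x * B ^ idx x + (\<Sum>a\<in>A. c a * B ^ idx a) = d x * B ^ idx x + (\<Sum>a\<in>A. d a * B ^ idx a)"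
      using insert(6) insert(1) False by simp
    have "c x = d x"
      using arg_cong[OF sums, of "\<lambda>n. n div B ^ idx x"] pos c_rest d_rest by simp
    moreover have "\<forall>a\<in>A. c a = d a"
      using insert(3)[OF \<open>inj_on idx A\<close>] insert(5) sums \<open>c x = d x\<close> by simp
    ultimately show ?thesis by simp
  qed
qed

lemma sum_mset_image_eq_sum_count:
  assumes "finite A" "set_mset X \<subseteq> A"
  shows "(\<Sum>a\<in>#X. f a) = (\<Sum>a\<in>A. count X a * f a)"
  using assms(2)
proof (induction X)
  case empty
  then show ?case by simp
next
  case (add x X)
  have "(\<Sum>a\<in>A. count (add_mset x X) a * f a) = (\<Sum>a\<in>A. count X a * f a + (if a = x then f x else 0))"
    by (rule sum.cong) (auto simp: algebra_simps)
  also have "\<dots> = (\<Sum>a\<in>A. count X a * f a) + f x"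
    using add.prems assms(1) by (simp add: sum.distrib)
  finally show ?case using add by simp
qed

text \<open>The multiplicities of the multisets are the base-\<open>B\<close> digits of the common weight.\<close>

lemma mset_eq_if_digit_weights_eq:
  fixes B :: nat
  assumes "inj_on idx (set_mset X \<union> set_mset Y)" "size X < B" "size Y < B"
    and "(\<Sum>a\<in>#X. B ^ idx a) = (\<Sum>a\<in>#Y. B ^ idx a)"
  shows "X = Y"
proof (rule multiset_eqI)
  fix a
  define A where "A = set_mset X \<union> set_mset Y"
  have "(\<Sum>a\<in>A. count X a * B ^ idx a) = (\<Sum>a\<in>A. count Y a * B ^ idx a)"
    using assms(4) sum_mset_image_eq_sum_count[of A X] sum_mset_image_eq_sum_count[of A Y]
    unfolding A_def by simp
  moreover have "count X b < B \<and> count Y b < B" for b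
    using assms(2,3) count_le_size le_less_trans by metis
  ultimately have "\<forall>a\<in>A. count X a = count Y a"
    using digits_unique[of A idx "count X" B "count Y"] assms(1) unfolding A_def by blast
  then show "count X a = count Y a"
    unfolding A_def by (metis UnCI count_eq_zero_iff)
qed

lemma card_fibre_eq_if_power_sums_eq:
  fixes f :: "'a \<Rightarrow> nat" and g :: "'b \<Rightarrow> nat"
  assumes "finite X" "finite Y" "\<And>M::nat. (\<Sum>x\<in>X. M ^ f x) = (\<Sum>y\<in>Y. M ^ g y)"
  shows "card {x\<in>X. f x = n} = card {y\<in>Y. g y = n}"
proof -
  define p where "p = (\<Sum>x\<in>X. monom (1::int) (f x))"
  define q where "q = (\<Sum>y\<in>Y. monom (1::int) (g y))"
  have "poly (p - q) (int M) = 0" for M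
  proof -
    have "int (\<Sum>x\<in>X. M ^ f x) = int (\<Sum>y\<in>Y. M ^ g y)" using assms(3) by simp
    then show ?thesis unfolding p_def q_def by (simp add: poly_sum poly_monom)
  qed
  then have "range int \<subseteq> {x. poly (p - q) x = 0}" by auto
  moreover have "infinite (range int)"
    using finite_imageD[OF _ inj_of_nat] by blast
  ultimately have "p = q"
    using poly_roots_finite[of "p - q"] finite_subset by auto
  then have "coeff p n = coeff q n" by simp
  moreover have "coeff p n = int (card {x\<in>X. f x = n})"
    by (simp add: p_def coeff_sum coeff_monom assms(1) sum.If_cases) (simp add: Int_def)
  moreover have "coeff q n = int (card {y\<in>Y. g y = n})"
    by (simp add: q_def coeff_sum coeff_monom assms(2) sum.If_cases) (simp add: Int_def)
  ultimately show ?thesis by simp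
qed

lemma eq_if_subset_sums_eq:
  fixes G H :: "'a set \<Rightarrow> 'b::cancel_comm_monoid_add"
  assumes "finite K" "\<And>T. T \<subseteq> K \<Longrightarrow> (\<Sum>U\<in>Pow T. G U) = (\<Sum>U\<in>Pow T. H U)" "T \<subseteq> K"
  shows "G T = H T"
proof -
  have "finite T" using assms(1,3) finite_subset by blast
  then show ?thesis using assms(3)
  proof (induction T rule: finite_psubset_induct)
    case (psubset T)
    have proper: "(\<Sum>U\<in>Pow T - {T}. G U) = (\<Sum>U\<in>Pow T - {T}. H U)"
      by (rule sum.cong) (use psubset in auto)
    have "G T + (\<Sum>U\<in>Pow T - {T}. G U) = H T + (\<Sum>U\<in>Pow T - {T}. H U)"
      using assms(2)[OF psubset(3)] psubset(1) sum.remove[of "Pow T" T G] sum.remove[of "Pow T" T H]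
      by simp
    then show ?case using proper by simp
  qed
qed

lemma sum_subset_level_sets:
  assumes "finite A" "finite T"
  shows "(\<Sum>x\<in>{x\<in>A. s x \<subseteq> T}. g x) = (\<Sum>U\<in>Pow T. \<Sum>x\<in>{x\<in>A. s x = U}. g x)"
proof -
  have "(\<Sum>x\<in>{x\<in>A. s x \<subseteq> T}. g x) = (\<Sum>U\<in>Pow T. \<Sum>x\<in>{x\<in>{x\<in>A. s x \<subseteq> T}. s x = U}. g x)"
    by (rule sum.group[symmetric]) (use assms in auto)
  also have "\<dots> = (\<Sum>U\<in>Pow T. \<Sum>x\<in>{x\<in>A. s x = U}. g x)"
    by (rule sum.cong) (auto intro!: sum.cong)
  finally show ?thesis .
qed

lemma card_top_level_eq:
  fixes s :: "'a \<Rightarrow> 'k set" and s' :: "'b \<Rightarrow> 'k set" and w :: "'a \<Rightarrow> nat" and w' :: "'b \<Rightarrow> nat"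
  assumes "finite A" "finite A'" "finite K"
    and "\<And>T (M::nat). T \<subseteq> K \<Longrightarrow> (\<Sum>x\<in>{x\<in>A. s x \<subseteq> T}. M ^ w x) = (\<Sum>y\<in>{y\<in>A'. s' y \<subseteq> T}. M ^ w' y)"
  shows "card {x\<in>A. s x = K \<and> w x = n} = card {y\<in>A'. s' y = K \<and> w' y = n}"
proof -
  have "(\<Sum>x\<in>{x\<in>A. s x = K}. M ^ w x) = (\<Sum>y\<in>{y\<in>A'. s' y = K}. M ^ w' y)" for M :: nat
  proof (rule eq_if_subset_sums_eq[OF assms(3), where T = K and
        G = "\<lambda>U. \<Sum>x\<in>{x\<in>A. s x = U}. M ^ w x" and H = "\<lambda>U. \<Sum>y\<in>{y\<in>A'. s' y = U}. M ^ w' y"])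
    fix T assume "T \<subseteq> K"
    then have "finite T" using assms(3) finite_subset by blast
    have "(\<Sum>U\<in>Pow T. \<Sum>x\<in>{x\<in>A. s x = U}. M ^ w x) = (\<Sum>x\<in>{x\<in>A. s x \<subseteq> T}. M ^ w x)"
      by (rule sum_subset_level_sets[symmetric, OF assms(1) \<open>finite T\<close>])
    also have "\<dots> = (\<Sum>y\<in>{y\<in>A'. s' y \<subseteq> T}. M ^ w' y)"
      by (rule assms(4)[OF \<open>T \<subseteq> K\<close>])
    also have "\<dots> = (\<Sum>U\<in>Pow T. \<Sum>y\<in>{y\<in>A'. s' y = U}. M ^ w' y)"
      by (rule sum_subset_level_sets[OF assms(2) \<open>finite T\<close>])
    finally show "(\<Sum>U\<in>Pow T. \<Sum>x\<in>{x\<in>A. s x = U}. M ^ w x) = (\<Sum>U\<in>Pow T. \<Sum>y\<in>{y\<in>A'. s' y = U}. M ^ w' y)" .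
  qed simp
  then have "card {x\<in>{x\<in>A. s x = K}. w x = n} = card {y\<in>{y\<in>A'. s' y = K}. w' y = n}"
    by (intro card_fibre_eq_if_power_sums_eq) (use assms(1,2) in auto)
  then show ?thesis by (simp only: mem_Collect_eq conj_assoc)
qed

section \<open>Renaming and deduplicating queries\<close>

lemma bij_betw_PiE_comp:
  assumes "inj_on f V"
  shows "bij_betw (\<lambda>\<gamma>. restrict (\<gamma> \<circ> f) V) (f ` V \<rightarrow>\<^sub>E A) (V \<rightarrow>\<^sub>E A)"
proof (rule bij_betwI[where g = "\<lambda>\<delta>. restrict (\<delta> \<circ> inv_into V f) (f ` V)"])
  show "(\<lambda>\<gamma>. restrict (\<gamma> \<circ> f) V) \<in> (f ` V \<rightarrow>\<^sub>E A) \<rightarrow> (V \<rightarrow>\<^sub>E A)"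
    by (auto simp: PiE_iff)
  show "(\<lambda>\<delta>. restrict (\<delta> \<circ> inv_into V f) (f ` V)) \<in> (V \<rightarrow>\<^sub>E A) \<rightarrow> (f ` V \<rightarrow>\<^sub>E A)"
    by (auto simp: PiE_iff inv_into_into)
next
  fix \<gamma> assume \<gamma>: "\<gamma> \<in> f ` V \<rightarrow>\<^sub>E A"
  show "restrict (restrict (\<gamma> \<circ> f) V \<circ> inv_into V f) (f ` V) = \<gamma>"
  proof
    fix y
    show "restrict (restrict (\<gamma> \<circ> f) V \<circ> inv_into V f) (f ` V) y = \<gamma> y"
      using PiE_arb[OF \<gamma>, of y] by (cases "y \<in> f ` V") (simp_all add: inv_into_into f_inv_into_f)
  qed
next
  fix \<delta> assume \<delta>: "\<delta> \<in> V \<rightarrow>\<^sub>E A"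
  show "restrict (restrict (\<delta> \<circ> inv_into V f) (f ` V) \<circ> f) V = \<delta>"
  proof
    fix x
    show "restrict (restrict (\<delta> \<circ> inv_into V f) (f ` V) \<circ> f) V x = \<delta> x"
      using PiE_arb[OF \<delta>, of x] by (cases "x \<in> V") (simp_all add: inv_into_f_f[OF assms])
  qed
qed

definition map_atom :: "('v \<Rightarrow> 'w) \<Rightarrow> ('r,'v) atom \<Rightarrow> ('r,'w) atom" where
  "map_atom f = (\<lambda>(p, xs). (p, map f xs))"

lemma map_atom_simps [simp]:
  "map_atom f (p, xs) = (p, map f xs)" "fst (map_atom f a) = fst a" "snd (map_atom f a) = map f (snd a)"
  by (simp_all add: map_atom_def split_beta)

lemma map_atom_comp: "map_atom (f \<circ> g) = map_atom f \<circ> map_atom g"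
  by (simp add: fun_eq_iff prod_eq_iff)

lemma map_atom_cong: "set (snd a) \<subseteq> V \<Longrightarrow> (\<And>x. x \<in> V \<Longrightarrow> f x = g x) \<Longrightarrow> map_atom f a = map_atom g a"
  by (auto simp: prod_eq_iff)

lemma inj_on_map_atom:
  assumes "inj_on f V"
  shows "inj_on (map_atom f) {a. set (snd a) \<subseteq> V}"
  using inj_on_map_eq_map[OF inj_on_subset[OF assms]] by (auto intro!: inj_onI simp: prod_eq_iff)

definition cq_rename :: "('v \<Rightarrow> 'w) \<Rightarrow> ('r,'v) cq \<Rightarrow> ('r,'w) cq" where
  "cq_rename f Q = \<lparr>head = map f (head Q), body = image_mset (map_atom f) (body Q)\<rparr>"

lemma cq_rename_simps [simp]:
  "head (cq_rename f Q) = map f (head Q)" "body (cq_rename f Q) = image_mset (map_atom f) (body Q)"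
  by (simp_all add: cq_rename_def)

lemma cq_rename_eq_iff:
  "cq_rename f Q = R \<longleftrightarrow> map f (head Q) = head R \<and> image_mset (map_atom f) (body Q) = body R"
  by (cases R) (auto simp: cq_rename_def)

lemma cq_iso_iff_rename: "cq_iso Q1 Q2 \<longleftrightarrow> (\<exists>f. inj_on f (cq_vars Q1) \<and> cq_rename f Q1 = Q2)"
  by (simp add: cq_iso_def cq_rename_eq_iff map_atom_def)

lemma atom_vars_subset: "a \<in># body Q \<Longrightarrow> set (snd a) \<subseteq> cq_vars Q"
  by (auto simp: cq_vars_def)

lemma cq_vars_rename: "cq_vars (cq_rename f Q) = f ` cq_vars Q"
  by (auto simp: cq_vars_def cq_rename_def)

lemma assignments_eq_PiE: "assignments Q D = cq_vars Q \<rightarrow>\<^sub>E adom D"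
  unfolding assignments_def PiE_def Pi_def extensional_def by auto

lemma finite_cq_vars: "finite (cq_vars Q)"
  unfolding cq_vars_def by auto

lemma bag_answer_rename:
  fixes Q :: "('r,'v) cq" and f :: "'v \<Rightarrow> 'w" and D :: "('r,'c) inst"
  assumes "inj_on f (cq_vars Q)" "set (head Q) \<subseteq> cq_vars Q"
  shows "bag_answer (cq_rename f Q) D = bag_answer Q D"
proof
  fix t
  define renamed where "renamed \<gamma> = (if map \<gamma> (map f (head Q)) = t
      then prod_mset (image_mset (\<lambda>(p,xs). D p (map \<gamma> xs)) (image_mset (map_atom f) (body Q))) else 0)"
    for \<gamma> :: "'w \<Rightarrow> 'c"
  define original where "original \<delta> = (if map \<delta> (head Q) = t
      then prod_mset (image_mset (\<lambda>(p,xs). D p (map \<delta> xs)) (body Q)) else 0)" for \<delta> :: "'v \<Rightarrow> 'c"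
  have "renamed \<gamma> = original (restrict (\<gamma> \<circ> f) (cq_vars Q))" for \<gamma>
  proof -
    have head: "map \<gamma> (map f (head Q)) = map (restrict (\<gamma> \<circ> f) (cq_vars Q)) (head Q)"
      unfolding map_map using assms(2) by (intro map_cong) auto
    have "image_mset (\<lambda>(p,xs). D p (map \<gamma> xs)) (image_mset (map_atom f) (body Q))
        = image_mset (\<lambda>(p,xs). D p (map (restrict (\<gamma> \<circ> f) (cq_vars Q)) xs)) (body Q)"
      unfolding image_mset.compositionality
    proof (rule image_mset_cong)
      fix a assume "a \<in># body Q"
      then have "set (snd a) \<subseteq> cq_vars Q" by (rule atom_vars_subset)
      then show "((\<lambda>(p,xs). D p (map \<gamma> xs)) \<circ> map_atom f) a
          = (\<lambda>(p,xs). D p (map (restrict (\<gamma> \<circ> f) (cq_vars Q)) xs)) a"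
        by (cases a) (auto intro!: arg_cong[where f = "D _"])
    qed
    then show ?thesis unfolding renamed_def original_def head by simp
  qed
  then have "(\<Sum>\<gamma>\<in>f ` cq_vars Q \<rightarrow>\<^sub>E adom D. renamed \<gamma>) = (\<Sum>\<delta>\<in>cq_vars Q \<rightarrow>\<^sub>E adom D. original \<delta>)"
    using sum.reindex_bij_betw[OF bij_betw_PiE_comp[OF assms(1)]] by simp
  then show "bag_answer (cq_rename f Q) D t = bag_answer Q D t"
    unfolding bag_answer_def assignments_eq_PiE cq_vars_rename cq_rename_simps
    by (simp add: renamed_def original_def)
qed

lemma bag_answer_iso:
  assumes "cq_iso Q1 Q2" "set (head Q1) \<subseteq> cq_vars Q1"
  shows "bag_answer Q1 D = bag_answer Q2 D"
  using assms bag_answer_rename by (metis cq_iso_iff_rename)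

lemma bag_answer_eq_sum_PiE:
  assumes "finite C" "adom D \<subseteq> C"
  shows "bag_answer Q D t = (\<Sum>\<gamma>\<in>cq_vars Q \<rightarrow>\<^sub>E C. if map \<gamma> (head Q) = t
        then prod_mset (image_mset (\<lambda>(p,xs). D p (map \<gamma> xs)) (body Q)) else 0)"
  unfolding bag_answer_def assignments_eq_PiE
proof (intro sum.mono_neutral_left ballI)
  show "finite (cq_vars Q \<rightarrow>\<^sub>E C)" using assms(1) finite_cq_vars by (intro finite_PiE) auto
  show "cq_vars Q \<rightarrow>\<^sub>E adom D \<subseteq> cq_vars Q \<rightarrow>\<^sub>E C" using assms(2) by (rule PiE_mono)
next
  fix \<gamma> assume "\<gamma> \<in> (cq_vars Q \<rightarrow>\<^sub>E C) - (cq_vars Q \<rightarrow>\<^sub>E adom D)"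
  then obtain x where x: "x \<in> cq_vars Q" "\<gamma> x \<notin> adom D" by (auto simp: PiE_iff)
  then obtain p xs where a: "(p, xs) \<in># body Q" "x \<in> set xs" by (auto simp: cq_vars_def)
  have "\<gamma> x \<in> set (map \<gamma> xs)" using a(2) by simp
  then have "D p (map \<gamma> xs) = 0"
    using x(2) unfolding adom_def by (metis (mono_tags, lifting) gr0I mem_Collect_eq)
  then have "0 \<in># image_mset (\<lambda>(p,xs). D p (map \<gamma> xs)) (body Q)"
    using a(1) by force
  then show "(if map \<gamma> (head Q) = t then prod_mset (image_mset (\<lambda>(p,xs). D p (map \<gamma> xs)) (body Q)) else 0) = 0"
    by (simp add: prod_mset_zero_iff)
qed

definition bag_part :: "'r set \<Rightarrow> ('r,'v) atom multiset \<Rightarrow> ('r,'v) atom multiset" where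
  "bag_part S B = filter_mset (\<lambda>a. fst a \<notin> S) B"

definition set_part :: "'r set \<Rightarrow> ('r,'v) atom multiset \<Rightarrow> ('r,'v) atom set" where
  "set_part S B = {a \<in> set_mset B. fst a \<in> S}"

lemma set_mset_eq_parts: "set_mset B = set_mset (bag_part S B) \<union> set_part S B"
  by (auto simp: bag_part_def set_part_def)

lemma bag_part_image: "bag_part S (image_mset (map_atom f) B) = image_mset (map_atom f) (bag_part S B)"
  by (simp add: bag_part_def filter_mset_image_mset)

lemma set_part_image: "set_part S (image_mset (map_atom f) B) = map_atom f ` set_part S B"
  by (auto simp: set_part_def)

lemma body_dedup: "body (dedup S Q) = bag_part S (body Q) + mset_set (set_part S (body Q))"
  by (simp add: dedup_def bag_part_def set_part_def)

lemma head_dedup [simp]: "head (dedup S Q) = head Q"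
  by (simp add: dedup_def)

lemma cq_vars_dedup [simp]: "cq_vars (dedup S Q) = cq_vars Q"
proof -
  have "set_mset (body (dedup S Q)) = set_mset (body Q)"
    unfolding body_dedup set_mset_eq_parts[of "body Q" S] by (simp add: set_part_def)
  then show ?thesis by (simp add: cq_vars_def)
qed

text \<open>\<open>m ^ k = m\<close> for \<open>m \<le> 1\<close> and \<open>k \<ge> 1\<close>.\<close>

lemma prod_mset_collapse_set_part:
  fixes g :: "('r,'v) atom \<Rightarrow> nat"
  assumes "\<And>a. fst a \<in> S \<Longrightarrow> g a \<le> 1"
  shows "prod_mset (image_mset g (bag_part S B + mset_set (set_part S B))) = prod_mset (image_mset g B)"
proof -
  define SB where "SB = filter_mset (\<lambda>a. fst a \<in> S) B"
  have "set_mset SB = set_part S B" by (auto simp: SB_def set_part_def)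
  have "prod_mset (image_mset g SB) = (\<Prod>a\<in>set_part S B. g a ^ count SB a)"
    by (simp add: image_prod_mset_multiplicity \<open>set_mset SB = set_part S B\<close>)
  also have "\<dots> = (\<Prod>a\<in>set_part S B. g a)"
  proof (rule prod.cong[OF refl])
    fix a assume "a \<in> set_part S B"
    then have "count SB a \<ge> 1" "g a \<le> 1"
      using assms \<open>set_mset SB = set_part S B\<close> by (auto simp: set_part_def Suc_le_eq)
    then show "g a ^ count SB a = g a"
      by (cases "g a = 0") (auto simp: le_Suc_eq)
  qed
  also have "\<dots> = prod_mset (image_mset g (mset_set (set_part S B)))"
    by (rule prod_unfold_prod_mset)
  finally have "prod_mset (image_mset g SB) = prod_mset (image_mset g (mset_set (set_part S B)))" .
  moreover have "B = bag_part S B + SB"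
    unfolding bag_part_def SB_def by (metis multiset_partition union_commute)
  ultimately show ?thesis by (metis image_mset_union prod_mset.union)
qed

lemma bag_answer_dedup:
  assumes "set_valued_on S D"
  shows "bag_answer (dedup S Q) D = bag_answer Q D"
proof -
  have prod_eq: "prod_mset (image_mset (\<lambda>(p,xs). D p (map \<gamma> xs)) (body (dedup S Q)))
      = prod_mset (image_mset (\<lambda>(p,xs). D p (map \<gamma> xs)) (body Q))" for \<gamma>
    unfolding body_dedup
    by (rule prod_mset_collapse_set_part) (use assms in \<open>auto simp: set_valued_on_def split_beta\<close>)
  show ?thesis
    unfolding bag_answer_def assignments_def cq_vars_dedup head_dedup prod_eq ..
qed

section \<open>Homomorphisms onto a query\<close>

definition set_image :: "'r set \<Rightarrow> ('r,'v) cq \<Rightarrow> ('v \<Rightarrow> 'w) \<Rightarrow> ('r,'w) atom set" where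
  "set_image S Q h = map_atom h ` set_part S (body Q)"

definition bag_image :: "'r set \<Rightarrow> ('r,'v) cq \<Rightarrow> ('v \<Rightarrow> 'w) \<Rightarrow> ('r,'w) atom multiset" where
  "bag_image S Q h = image_mset (map_atom h) (bag_part S (body Q))"

text \<open>\<open>h\<close> maps \<open>dedup S Q\<close> onto \<open>dedup S P\<close>, except that distinct \<open>S\<close>-subgoals may be
  identified.\<close>

definition onto_hom :: "'r set \<Rightarrow> ('v \<Rightarrow> 'w) \<Rightarrow> ('r,'v) cq \<Rightarrow> ('r,'w) cq \<Rightarrow> bool" where
  "onto_hom S h Q P \<longleftrightarrow>
     map h (head Q) = head P \<and> bag_image S Q h = bag_part S (body P) \<and> set_image S Q h = set_part S (body P)"

lemma onto_hom_rename: "onto_hom S h Q (cq_rename h Q)"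
  by (simp add: onto_hom_def bag_image_def set_image_def bag_part_image set_part_image)

lemma bag_image_comp: "bag_image S Q (f \<circ> g) = image_mset (map_atom f) (bag_image S Q g)"
  by (simp add: bag_image_def map_atom_comp image_mset.compositionality)

lemma set_image_comp: "set_image S Q (f \<circ> g) = map_atom f ` set_image S Q g"
  by (simp add: set_image_def map_atom_comp image_comp)

lemma onto_hom_comp:
  assumes "onto_hom S g Q R" "onto_hom S f R P"
  shows "onto_hom S (f \<circ> g) Q P"
  using assms unfolding onto_hom_def bag_image_comp set_image_comp
  by (simp add: bag_image_def set_image_def flip: map_map)

lemma cq_rename_comp: "cq_rename f (cq_rename g Q) = cq_rename (f \<circ> g) Q"
  by (simp add: cq_rename_eq_iff image_mset.compositionality map_atom_comp)

lemma cq_rename_id_on: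
  assumes "\<And>x. x \<in> cq_vars Q \<Longrightarrow> f x = x" "set (head Q) \<subseteq> cq_vars Q"
  shows "cq_rename f Q = Q"
proof -
  have "map_atom f a = a" if "a \<in># body Q" for a
    using map_atom_cong[OF atom_vars_subset[OF that], of f id] assms(1) by (simp add: prod_eq_iff)
  then show ?thesis
    using assms by (simp add: cq_rename_eq_iff map_idI subset_iff image_mset_cong[where g = id])
qed

lemma onto_hom_rename_inv:
  assumes "inj_on c (cq_vars P)" "set (head P) \<subseteq> cq_vars P"
  shows "onto_hom S (inv_into (cq_vars P) c) (cq_rename c P) P"
  using onto_hom_rename[of S "inv_into (cq_vars P) c" "cq_rename c P"]
  by (simp add: cq_rename_comp cq_rename_id_on assms inv_into_f_f)

lemma set_body_onto_hom:
  assumes "onto_hom S h Q P"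
  shows "set_mset (body P) = map_atom h ` set_mset (body Q)"
  using assms unfolding onto_hom_def bag_image_def set_image_def
  by (metis image_Un set_image_mset set_mset_eq_parts)

lemma cq_vars_onto_hom:
  assumes "onto_hom S h Q P"
  shows "cq_vars P = h ` cq_vars Q"
  unfolding cq_vars_def set_body_onto_hom[OF assms] by auto

lemma cq_iso_dedup_if_onto_hom:
  assumes hom: "onto_hom S h Q P" and inj: "inj_on h (cq_vars Q)"
  shows "cq_iso (dedup S Q) (dedup S P)"
proof -
  have "inj_on (map_atom h) (set_part S (body Q))"
    by (rule inj_on_subset[OF inj_on_map_atom[OF inj]]) (auto simp: set_part_def dest: atom_vars_subset)
  then have "image_mset (map_atom h) (body (dedup S Q)) = body (dedup S P)"
    using hom by (simp add: body_dedup onto_hom_def bag_image_def set_image_def image_mset_mset_set)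
  then have "cq_rename h (dedup S Q) = dedup S P"
    using hom by (simp add: cq_rename_eq_iff onto_hom_def)
  then show ?thesis
    using inj by (auto simp: cq_iso_iff_rename)
qed

lemma inj_on_if_surjections_both_ways:
  assumes "finite A" "h ` A = B" "g ` B = A"
  shows "inj_on h A"
proof (rule eq_card_imp_inj_on[OF assms(1)])
  have "card A \<le> card B" using assms card_image_le by (metis finite_imageI)
  then show "card (h ` A) = card A" using assms(1,2) card_image_le le_antisym by blast
qed

section \<open>Probe instances\<close>

definition probe_inst ::
  "('r,'c) atom set \<Rightarrow> 'r set \<Rightarrow> (('r,'c) atom \<Rightarrow> nat) \<Rightarrow> ('r,'c) atom set \<Rightarrow> nat \<Rightarrow> ('r,'c) inst" where
  "probe_inst K S e T M p xs =
     (if (p, xs) \<notin> K then 0 else if p \<in> S then of_bool ((p, xs) \<in> T) else M ^ e (p, xs))"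

lemma instance_over_probe_inst:
  assumes "finite K" "\<And>a. a \<in> K \<Longrightarrow> fst a \<in> Sch \<and> length (snd a) = ar (fst a)"
  shows "instance_over Sch ar (probe_inst K S e T M)"
proof -
  have support: "{(p, xs). probe_inst K S e T M p xs > 0} \<subseteq> K"
    by (auto simp: probe_inst_def split: if_splits)
  then show ?thesis
    using assms finite_subset[OF support] unfolding instance_over_def by fastforce
qed

lemma set_valued_probe_inst: "set_valued_on S (probe_inst K S e T M)"
  by (simp add: set_valued_on_def probe_inst_def)

lemma adom_probe_inst: "adom (probe_inst K S e T M) \<subseteq> (\<Union>a\<in>K. set (snd a))"
  by (force simp: adom_def probe_inst_def split: if_splits)

lemma prod_mset_probe_inst:
  "prod_mset (image_mset (\<lambda>(p,xs). probe_inst K S e T M p (map \<gamma> xs)) B) =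
   (if \<forall>a\<in>#B. map_atom \<gamma> a \<in> K \<and> (fst a \<in> S \<longrightarrow> map_atom \<gamma> a \<in> T)
    then M ^ (\<Sum>a\<in>#image_mset (map_atom \<gamma>) (bag_part S B). e a) else 0)"
proof (induction B)
  case (add a B)
  then show ?case
    by (cases a) (auto simp: probe_inst_def bag_part_def power_add)
qed (simp add: bag_part_def)

definition probe_assignments :: "('r,'v) cq \<Rightarrow> 'c set \<Rightarrow> 'c list \<Rightarrow> ('r,'c) atom set \<Rightarrow> ('v \<Rightarrow> 'c) set" where
  "probe_assignments Q C t K = {\<gamma> \<in> cq_vars Q \<rightarrow>\<^sub>E C. map \<gamma> (head Q) = t \<and> (\<forall>a\<in>#body Q. map_atom \<gamma> a \<in> K)}"

lemma finite_probe_assignments: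
  assumes "finite C"
  shows "finite (probe_assignments Q C t K)"
proof (rule finite_subset)
  show "probe_assignments Q C t K \<subseteq> cq_vars Q \<rightarrow>\<^sub>E C" by (auto simp: probe_assignments_def)
  show "finite (cq_vars Q \<rightarrow>\<^sub>E C)" using assms by (intro finite_PiE finite_cq_vars)
qed

lemma bag_answer_probe_inst:
  assumes "finite C" "\<And>a. a \<in> K \<Longrightarrow> set (snd a) \<subseteq> C"
  shows "bag_answer Q (probe_inst K S e T M) t =
    (\<Sum>\<gamma>\<in>{\<gamma>\<in>probe_assignments Q C t K. set_image S Q \<gamma> \<subseteq> T}. M ^ (\<Sum>a\<in>#bag_image S Q \<gamma>. e a))"
proof -
  have adom: "adom (probe_inst K S e T M) \<subseteq> C" using adom_probe_inst assms(2) by fast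
  have "bag_answer Q (probe_inst K S e T M) t = (\<Sum>\<gamma>\<in>cq_vars Q \<rightarrow>\<^sub>E C.
      if \<gamma> \<in> probe_assignments Q C t K \<and> set_image S Q \<gamma> \<subseteq> T then M ^ (\<Sum>a\<in>#bag_image S Q \<gamma>. e a) else 0)"
    unfolding bag_answer_eq_sum_PiE[OF assms(1) adom] prod_mset_probe_inst
    by (intro sum.cong) (auto simp: probe_assignments_def set_image_def bag_image_def set_part_def)
  also have "\<dots> = (\<Sum>\<gamma>\<in>{\<gamma>\<in>cq_vars Q \<rightarrow>\<^sub>E C. \<gamma> \<in> probe_assignments Q C t K \<and> set_image S Q \<gamma> \<subseteq> T}.
      M ^ (\<Sum>a\<in>#bag_image S Q \<gamma>. e a))"
    by (rule sum.inter_filter[symmetric]) (intro finite_PiE finite_cq_vars assms(1))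
  also have "{\<gamma>\<in>cq_vars Q \<rightarrow>\<^sub>E C. \<gamma> \<in> probe_assignments Q C t K \<and> set_image S Q \<gamma> \<subseteq> T}
      = {\<gamma>\<in>probe_assignments Q C t K. set_image S Q \<gamma> \<subseteq> T}"
    by (auto simp: probe_assignments_def)
  finally show ?thesis .
qed

lemma card_probe_level_eq:
  fixes P Q :: "('r,'v) cq" and e :: "('r,'c) atom \<Rightarrow> nat"
  assumes equiv: "\<And>D :: ('r,'c) inst. instance_over Sch ar D \<Longrightarrow> set_valued_on S D \<Longrightarrow> bag_answer P D = bag_answer Q D"
    and "finite C" "finite K" "KS \<subseteq> K"
    and K: "\<And>a. a \<in> K \<Longrightarrow> fst a \<in> Sch \<and> length (snd a) = ar (fst a) \<and> set (snd a) \<subseteq> C"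
  shows "card {\<gamma>\<in>probe_assignments P C t K. set_image S P \<gamma> = KS \<and> (\<Sum>a\<in>#bag_image S P \<gamma>. e a) = n}
       = card {\<gamma>\<in>probe_assignments Q C t K. set_image S Q \<gamma> = KS \<and> (\<Sum>a\<in>#bag_image S Q \<gamma>. e a) = n}"
proof (rule card_top_level_eq[where s = "set_image S P" and s' = "set_image S Q"
      and w = "\<lambda>\<gamma>. \<Sum>a\<in>#bag_image S P \<gamma>. e a" and w' = "\<lambda>\<gamma>. \<Sum>a\<in>#bag_image S Q \<gamma>. e a"])
  show "finite KS" using assms(3,4) finite_subset by blast
  fix T M
  have "\<And>a. a \<in> K \<Longrightarrow> set (snd a) \<subseteq> C" using K by blast
  note answer = bag_answer_probe_inst[OF assms(2) this]
  have "instance_over Sch ar (probe_inst K S e T M)"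
    by (rule instance_over_probe_inst[OF assms(3)]) (use K in blast)
  then have "bag_answer P (probe_inst K S e T M) t = bag_answer Q (probe_inst K S e T M) t"
    by (simp add: equiv set_valued_probe_inst)
  then show "(\<Sum>\<gamma>\<in>{\<gamma>\<in>probe_assignments P C t K. set_image S P \<gamma> \<subseteq> T}. M ^ (\<Sum>a\<in>#bag_image S P \<gamma>. e a))
      = (\<Sum>\<gamma>\<in>{\<gamma>\<in>probe_assignments Q C t K. set_image S Q \<gamma> \<subseteq> T}. M ^ (\<Sum>a\<in>#bag_image S Q \<gamma>. e a))"
    by (simp only: answer)
qed (use assms(2) finite_probe_assignments in auto)

lemma ex_inj_on_into_infinite:
  assumes "finite A" "infinite (UNIV :: 'b set)"
  shows "\<exists>f :: 'a \<Rightarrow> 'b. inj_on f A"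
proof -
  obtain B :: "'b set" where "finite B" "card B = card A"
    using infinite_arbitrarily_large[OF assms(2)] by blast
  then show ?thesis using card_le_inj[OF assms(1)] by (metis order_refl)
qed

text \<open>Atom \<open>a\<close> weighs \<open>B ^ idx a\<close> with \<open>B\<close> exceeding both body sizes, so the weight of the
  bag image of \<open>\<gamma>\<close> determines that image.\<close>

lemma onto_hom_if_probe_weights_eq:
  assumes \<gamma>: "\<gamma> \<in> probe_assignments Q C (head R) (set_mset (body R))" "set_image S Q \<gamma> = set_part S (body R)"
    and idx: "inj_on idx (set_mset (body R))" and "size (body Q) < B" "size (body R) < B"
    and "(\<Sum>a\<in>#bag_image S Q \<gamma>. B ^ idx a) = (\<Sum>a\<in>#bag_part S (body R). B ^ idx a)"
  shows "onto_hom S \<gamma> Q R"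
proof -
  have "bag_image S Q \<gamma> = bag_part S (body R)"
  proof (rule mset_eq_if_digit_weights_eq)
    show "inj_on idx (set_mset (bag_image S Q \<gamma>) \<union> set_mset (bag_part S (body R)))"
    proof (rule inj_on_subset[OF idx])
      show "set_mset (bag_image S Q \<gamma>) \<union> set_mset (bag_part S (body R)) \<subseteq> set_mset (body R)"
        using \<gamma>(1) by (auto simp: probe_assignments_def bag_image_def bag_part_def)
    qed
    have "size (bag_image S Q \<gamma>) \<le> size (body Q)" "size (bag_part S (body R)) \<le> size (body R)"
      by (simp_all add: bag_image_def bag_part_def)
    then show "size (bag_image S Q \<gamma>) < B" "size (bag_part S (body R)) < B"
      using assms(4,5) by linarith+
  qed fact
  then show ?thesis
    using \<gamma> by (simp add: onto_hom_def probe_assignments_def)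
qed

text \<open>Freeze \<open>P\<close> injectively to \<open>R\<close>: the freezing map lies in the top level of the probe sums
  for \<open>P\<close>, so some assignment of \<open>Q\<close> does too.\<close>

lemma onto_hom_if_equivalent:
  fixes P Q :: "('r,'v) cq"
  assumes "infinite (UNIV :: 'c set)" "cq_over Sch ar P"
    and equiv: "\<And>D :: ('r,'c) inst. instance_over Sch ar D \<Longrightarrow> set_valued_on S D \<Longrightarrow> bag_answer P D = bag_answer Q D"
  shows "\<exists>h. onto_hom S h Q P"
proof -
  obtain c0 :: "'v \<Rightarrow> 'c" where "inj_on c0 (cq_vars P)"
    using ex_inj_on_into_infinite[OF finite_cq_vars assms(1)] by blast
  define c where "c = restrict c0 (cq_vars P)"
  have inj: "inj_on c (cq_vars P)" using \<open>inj_on c0 (cq_vars P)\<close> by (simp add: c_def)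
  define R where "R = cq_rename c P"
  define C where "C = c ` cq_vars P"
  define K where "K = set_mset (body R)"
  obtain idx :: "('r,'c) atom \<Rightarrow> nat" where idx: "inj_on idx K"
    using finite_imp_inj_to_nat_seg[of K] by (auto simp: K_def)
  define B where "B = Suc (size (body P) + size (body Q))"
  define level where "level X = {\<gamma>\<in>probe_assignments X C (head R) K. set_image S X \<gamma> = set_part S (body R)
      \<and> (\<Sum>a\<in>#bag_image S X \<gamma>. B ^ idx a) = (\<Sum>a\<in>#bag_part S (body R). B ^ idx a)}"
    for X :: "('r,'v) cq"
  have "fst a \<in> Sch \<and> length (snd a) = ar (fst a) \<and> set (snd a) \<subseteq> C" if a: "a \<in> K" for a
  proof -
    obtain b where b: "b \<in># body P" "a = map_atom c b"
      using a unfolding K_def R_def cq_rename_simps set_image_mset by blast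
    then show ?thesis using assms(2) atom_vars_subset[OF b(1)] by (auto simp: cq_over_def C_def)
  qed
  then have "card (level P) = card (level Q)"
    unfolding level_def by (intro card_probe_level_eq[OF equiv]) (auto simp: C_def K_def set_part_def finite_cq_vars)
  moreover have "c \<in> level P"
    using onto_hom_rename[of S c P]
    by (auto simp: level_def probe_assignments_def onto_hom_def c_def C_def K_def R_def)
  moreover have "finite (level X)" for X
    unfolding level_def
    by (rule finite_subset[OF _ finite_probe_assignments]) (auto simp: C_def finite_cq_vars)
  ultimately have "card (level Q) > 0" by (metis card_gt_0_iff empty_iff)
  then obtain \<gamma> where "\<gamma> \<in> level Q" by (auto simp: card_gt_0_iff)
  then have "onto_hom S \<gamma> Q R"
    using idx by (intro onto_hom_if_probe_weights_eq[where B = B and idx = idx])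
      (auto simp: level_def K_def B_def R_def)
  moreover have "onto_hom S (inv_into (cq_vars P) c) R P"
    unfolding R_def by (rule onto_hom_rename_inv[OF inj]) (use assms(2) in \<open>simp add: cq_over_def\<close>)
  ultimately show ?thesis by (blast intro: onto_hom_comp)
qed

theorem theorem4p2:
  fixes Sch :: "'r set" and ar :: "'r \<Rightarrow> nat" and S :: "'r set"
    and Q1 Q2 :: "('r,'v) cq"
  assumes "infinite (UNIV :: 'c set)"
    and "S \<subseteq> Sch"
    and "cq_over Sch ar Q1" and "cq_over Sch ar Q2"
  shows "(\<forall>D :: ('r,'c) inst. instance_over Sch ar D \<and> set_valued_on S D \<longrightarrow>
            bag_answer Q1 D = bag_answer Q2 D)
         \<longleftrightarrow> cq_iso (dedup S Q1) (dedup S Q2)"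
proof
  assume equiv: "\<forall>D :: ('r,'c) inst. instance_over Sch ar D \<and> set_valued_on S D \<longrightarrow>
            bag_answer Q1 D = bag_answer Q2 D"
  obtain h where h: "onto_hom S h Q1 Q2"
    using onto_hom_if_equivalent[OF assms(1,4)] equiv by metis
  obtain g where g: "onto_hom S g Q2 Q1"
    using onto_hom_if_equivalent[OF assms(1,3)] equiv by metis
  have "inj_on h (cq_vars Q1)"
    using inj_on_if_surjections_both_ways[OF finite_cq_vars]
      cq_vars_onto_hom[OF h] cq_vars_onto_hom[OF g] by metis
  then show "cq_iso (dedup S Q1) (dedup S Q2)"
    by (rule cq_iso_dedup_if_onto_hom[OF h])
next
  assume iso: "cq_iso (dedup S Q1) (dedup S Q2)"
  have "set (head (dedup S Q1)) \<subseteq> cq_vars (dedup S Q1)"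
    using assms(3) by (simp add: cq_over_def)
  then show "\<forall>D :: ('r,'c) inst. instance_over Sch ar D \<and> set_valued_on S D \<longrightarrow>
            bag_answer Q1 D = bag_answer Q2 D"
    using bag_answer_iso[OF iso] bag_answer_dedup by metis
qed

end
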